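(* (i) $A\vdash_{\mathbf{RJ}}B$ iff $A\vdash B$ is true in all RJ-models. (ii) $A\vdash_{\mathbf{RC}}B$ iff $A\vdash B$ is true in all RC-models. (iii) $A\vdash_{\mathbf{RC\omega}}B$ iff $A\vdash B$ is true in all persistent RC-models.
   Context: Strictly positive formulas: $A::= p\mid \top\mid (A\land B)\mid \alpha A$, $\alpha\le\omega$. $\mathbf{RJ}$: $A\vdash A$; $A\vdash\top$; cut; $A\land B\vdash A$; $A\land B\vdash B$; from $A\vdash B$, $A\vdash C$ infer $A\vdash B\land C$; from $A\vdash B$ infer $\alpha A\vdash\alpha B$; $\alpha\alpha A\vdash\alpha A$; $\alpha\beta A\vdash\beta A$, $\beta\alpha A\vdash\beta A$ for $\alpha\ge\beta$; $\alpha A\land\beta B\vdash\alpha(A\land\beta B)$ for $\alpha>\beta$. $\mathbf{RC}=\mathbf{RJ}+\{\alpha A\vdash\beta A:\alpha>\beta\}$; $\mathbf{RC\omega}=\mathbf{RC}+\{\omega A\vdash A\}$. A Kripke model for signature $S\subseteq\{0,1,\dots,\omega\}$ is a nonempty set $W$ with relations $(R_\alpha)_{\alpha\in S}$ and a valuation of variables; $x\Vdash\top$; $x\Vdash A\land B$ iff both; $x\Vdash\alpha A$ iff $\exists y(xR_\alpha y\wedge y\Vdash A)$. An RJ$_S$-frame satisfies $R_\alpha R_\beta\subseteq R_{\min(\alpha,\beta)}$ (i.e. $xR_\alpha yR_\beta z\Rightarrow xR_{\min(\alpha,\beta)}z$) for all $\alpha,\beta\in S$, and, for $\alpha>\beta$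 in $S$, $xR_\alpha y$ and $xR_\beta z$ imply $yR_\beta z$. An RC$_S$-frame is an RJ$_S$-frame with $R_\alpha\subseteq R_\beta$ for $\beta<\alpha$ in $S$. RJ-/RC-models are those with $S=\{0,1,\dots,\omega\}$. A model is persistent if $x\Vdash p$ and $yR_\omega x$ imply $y\Vdash p$ for each variable $p$. A sequent $A\vdash B$ is true in a model if every node forcing $A$ forces $B$. *)

theory Defs
  imports Main "HOL-Library.Extended_Nat"
begin

text \<open>Modal indices alpha \<le> omega are represented by enat, with \<infinity> standing for omega.
  Propositional variables are natural numbers.\<close>

datatype fm = Var nat | Top | And fm fm | Dia enat fm

inductive prov :: "(fm \<Rightarrow> fm \<Rightarrow> bool) \<Rightarrow> fm \<Rightarrow> fm \<Rightarrow> bool" for Ax where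
  ax: "Ax A B \<Longrightarrow> prov Ax A B"
| refl: "prov Ax A A"
| top: "prov Ax A Top"
| cut: "prov Ax A B \<Longrightarrow> prov Ax B C \<Longrightarrow> prov Ax A C"
| conjE1: "prov Ax (And A B) A"
| conjE2: "prov Ax (And A B) B"
| conjI: "prov Ax A B \<Longrightarrow> prov Ax A C \<Longrightarrow> prov Ax A (And B C)"
| mono: "prov Ax A B \<Longrightarrow> prov Ax (Dia a A) (Dia a B)"
| trans4: "prov Ax (Dia a (Dia a A)) (Dia a A)"
| absorb1: "a \<ge> b \<Longrightarrow> prov Ax (Dia a (Dia b A)) (Dia b A)"
| absorb2: "a \<ge> b \<Longrightarrow> prov Ax (Dia b (Dia a A)) (Dia b A)"
| pull: "a > b \<Longrightarrow> prov Ax (And (Dia a A) (Dia b B)) (Dia a (And A (Dia b B)))"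

definition RJ_ax :: "fm \<Rightarrow> fm \<Rightarrow> bool" where
  "RJ_ax A B \<longleftrightarrow> False"

definition RC_ax :: "fm \<Rightarrow> fm \<Rightarrow> bool" where
  "RC_ax A B \<longleftrightarrow> (\<exists>a b C. a > b \<and> A = Dia a C \<and> B = Dia b C)"

definition RCw_ax :: "fm \<Rightarrow> fm \<Rightarrow> bool" where
  "RCw_ax A B \<longleftrightarrow> RC_ax A B \<or> A = Dia \<infinity> B"

abbreviation RJ_prov where "RJ_prov \<equiv> prov RJ_ax"
abbreviation RC_prov where "RC_prov \<equiv> prov RC_ax"
abbreviation RCw_prov where "RCw_prov \<equiv> prov RCw_ax"

fun sat :: "nat set \<Rightarrow> (enat \<Rightarrow> nat \<Rightarrow> nat \<Rightarrow> bool) \<Rightarrow> (nat \<Rightarrow> nat \<Rightarrow> bool) \<Rightarrow> nat \<Rightarrow> fm \<Rightarrow> bool" where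
  "sat W R V x (Var p) = V p x"
| "sat W R V x Top = True"
| "sat W R V x (And A B) = (sat W R V x A \<and> sat W R V x B)"
| "sat W R V x (Dia a A) = (\<exists>y\<in>W. R a x y \<and> sat W R V y A)"

definition RJ_frame :: "nat set \<Rightarrow> (enat \<Rightarrow> nat \<Rightarrow> nat \<Rightarrow> bool) \<Rightarrow> bool" where
  "RJ_frame W R \<longleftrightarrow> W \<noteq> {} \<and>
     (\<forall>a b. \<forall>x\<in>W. \<forall>y\<in>W. \<forall>z\<in>W. R a x y \<and> R b y z \<longrightarrow> R (min a b) x z) \<and>
     (\<forall>a b. a > b \<longrightarrow> (\<forall>x\<in>W. \<forall>y\<in>W. \<forall>z\<in>W. R a x y \<and> R b x z \<longrightarrow> R b y z))"

definition RC_frame :: "nat set \<Rightarrow> (enat \<Rightarrow> nat \<Rightarrow> nat \<Rightarrow> bool) \<Rightarrow> bool" where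
  "RC_frame W R \<longleftrightarrow> RJ_frame W R \<and>
     (\<forall>a b. b < a \<longrightarrow> (\<forall>x\<in>W. \<forall>y\<in>W. R a x y \<longrightarrow> R b x y))"

definition persistent :: "nat set \<Rightarrow> (enat \<Rightarrow> nat \<Rightarrow> nat \<Rightarrow> bool) \<Rightarrow> (nat \<Rightarrow> nat \<Rightarrow> bool) \<Rightarrow> bool" where
  "persistent W R V \<longleftrightarrow> (\<forall>p. \<forall>x\<in>W. \<forall>y\<in>W. V p x \<and> R \<infinity> y x \<longrightarrow> V p y)"

definition true_in :: "nat set \<Rightarrow> (enat \<Rightarrow> nat \<Rightarrow> nat \<Rightarrow> bool) \<Rightarrow> (nat \<Rightarrow> nat \<Rightarrow> bool) \<Rightarrow> fm \<Rightarrow> fm \<Rightarrow> bool" where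
  "true_in W R V A B \<longleftrightarrow> (\<forall>x\<in>W. sat W R V x A \<longrightarrow> sat W R V x B)"

end

theory Submission
  imports Defs "HOL-Library.Countable"
begin

text \<open>For completeness, the worlds of the
  canonical model for \<open>A\<close> are deductively closed theories indexed by paths from the theory of
  \<open>A\<close>: the \<open>a\<close>-successor witnessing \<open>\<diamond>\<^sub>a C \<in> \<Gamma>\<close> is generated by \<open>C\<close> together with all
  \<open>\<diamond>\<^sub>b D \<in> \<Gamma>\<close> for \<open>b < a\<close>. It lies \<open>a\<close>-above \<open>\<Gamma>\<close> because the axiom
  \<open>\<diamond>\<^sub>a F \<and> \<diamond>\<^sub>b D \<turnstile> \<diamond>\<^sub>a (F \<and> \<diamond>\<^sub>b D)\<close> lets each generator be pushed under \<open>\<diamond>\<^sub>a\<close>.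
  The axioms of RJ make the canonical relations an RJ-frame, the extra axioms of RC and RC\<omega>
  give the RC-condition and persistence, and the truth lemma evaluated at the root yields
  \<open>A \<turnstile> B\<close> from validity.\<close>

lemma RJ_frame_comp:
  assumes "RJ_frame W R" "x \<in> W" "y \<in> W" "z \<in> W" "R a x y" "R b y z"
  shows "R (min a b) x z"
  using assms unfolding RJ_frame_def by blast

lemma RJ_frame_pull:
  assumes "RJ_frame W R" "b < a" "x \<in> W" "y \<in> W" "z \<in> W" "R a x y" "R b x z"
  shows "R b y z"
  using assms unfolding RJ_frame_def by blast

lemma sat_Dia_Dia_min:
  assumes "RJ_frame W R" "x \<in> W" "sat W R V x (Dia a (Dia b A))"
  shows "sat W R V x (Dia (min a b) A)"
proof -
  obtain y z where "y \<in> W" "R a x y" "z \<in> W" "R b y z" "sat W R V z A"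
    using assms(3) by auto
  then show ?thesis using RJ_frame_comp[OF assms(1,2) \<open>y \<in> W\<close> \<open>z \<in> W\<close>] by auto
qed

lemma prov_sound:
  assumes "prov Ax A B" and frame: "RJ_frame W R"
    and Ax_valid: "\<And>C D. Ax C D \<Longrightarrow> true_in W R V C D"
  shows "true_in W R V A B"
  using assms(1) unfolding true_in_def
proof (induction rule: prov.induct)
  case (ax A B)
  then show ?case using Ax_valid unfolding true_in_def by blast
next
  case (cut A B C)
  then show ?case by blast
next
  case (mono A B a)
  then show ?case by auto
next
  case (trans4 a A)
  then show ?case using sat_Dia_Dia_min[OF frame, where a = a and b = a] by simp
next
  case (absorb1 a b A)
  then show ?case using sat_Dia_Dia_min[OF frame, where a = a and b = b] by (simp add: min_absorb2)
next
  case (absorb2 a b A)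
  then show ?case using sat_Dia_Dia_min[OF frame, where a = b and b = a] by (simp add: min_absorb1)
next
  case (pull a b A B)
  show ?case
  proof (intro ballI impI)
    fix x assume "x \<in> W" "sat W R V x (And (Dia a A) (Dia b B))"
    then obtain y z where "y \<in> W" "R a x y" "sat W R V y A" "z \<in> W" "R b x z" "sat W R V z B"
      by auto
    moreover from this have "R b y z" using RJ_frame_pull[OF frame pull.hyps \<open>x \<in> W\<close>] by blast
    ultimately show "sat W R V x (Dia a (And A (Dia b B)))" by auto
  qed
qed simp_all

lemma RC_ax_valid:
  assumes "RC_frame W R" "RC_ax C D"
  shows "true_in W R V C D"
proof -
  obtain a b E where "b < a" "C = Dia a E" "D = Dia b E"
    using assms(2) unfolding RC_ax_def by blast
  moreover have "\<forall>x\<in>W. \<forall>y\<in>W. R a x y \<longrightarrow> R b x y"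
    using assms(1) \<open>b < a\<close> unfolding RC_frame_def by blast
  ultimately show ?thesis unfolding true_in_def by auto
qed

lemma sat_persistent:
  assumes frame: "RJ_frame W R" and "persistent W R V"
    and "x \<in> W" "y \<in> W" "R \<infinity> x y" "sat W R V y C"
  shows "sat W R V x C"
  using assms(3-6)
proof (induction C arbitrary: x y)
  case (Var p)
  then show ?case using \<open>persistent W R V\<close> unfolding persistent_def sat.simps by blast
next
  case (And C D)
  then show ?case by (meson sat.simps(3))
next
  case (Dia b C)
  obtain z where "z \<in> W" "R b y z" "sat W R V z C" using Dia.prems(4) by auto
  moreover have "R (min \<infinity> b) x z"
    using RJ_frame_comp[OF frame Dia.prems(1,2) \<open>z \<in> W\<close> Dia.prems(3) \<open>R b y z\<close>] .
  ultimately show ?case by auto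
qed simp

lemma RCw_ax_valid:
  assumes "RC_frame W R" "persistent W R V" "RCw_ax C D"
  shows "true_in W R V C D"
proof (cases "RC_ax C D")
  case False
  then have "C = Dia \<infinity> D" using assms(3) unfolding RCw_ax_def by simp
  moreover have "RJ_frame W R" using assms(1) unfolding RC_frame_def by simp
  ultimately show ?thesis
    using sat_persistent[OF _ assms(2)] unfolding true_in_def by auto
qed (use assms(1) RC_ax_valid in blast)

inductive_set Cn :: "(fm \<Rightarrow> fm \<Rightarrow> bool) \<Rightarrow> fm set \<Rightarrow> fm set" for Ax S where
  base: "D \<in> S \<Longrightarrow> D \<in> Cn Ax S"
| top: "Top \<in> Cn Ax S"
| conj: "D \<in> Cn Ax S \<Longrightarrow> E \<in> Cn Ax S \<Longrightarrow> And D E \<in> Cn Ax S"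
| prov: "D \<in> Cn Ax S \<Longrightarrow> prov Ax D E \<Longrightarrow> E \<in> Cn Ax S"

lemma And_in_Cn_iff: "And D E \<in> Cn Ax S \<longleftrightarrow> D \<in> Cn Ax S \<and> E \<in> Cn Ax S"
  by (auto intro: Cn.intros prov.conjE1 prov.conjE2)

lemma prov_of_Cn_singleton: "D \<in> Cn Ax {A} \<Longrightarrow> prov Ax A D"
  by (induction rule: Cn.induct) (auto intro: prov.intros)

fun world_gens :: "(fm \<Rightarrow> fm \<Rightarrow> bool) \<Rightarrow> fm \<Rightarrow> (enat \<times> fm) list \<Rightarrow> fm set" where
  "world_gens Ax A [] = {A}"
| "world_gens Ax A ((a, C) # l) =
     insert C {Dia b D | b D. b < a \<and> Dia b D \<in> Cn Ax (world_gens Ax A l)}"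

abbreviation world :: "(fm \<Rightarrow> fm \<Rightarrow> bool) \<Rightarrow> fm \<Rightarrow> (enat \<times> fm) list \<Rightarrow> fm set" where
  "world Ax A l \<equiv> Cn Ax (world_gens Ax A l)"

definition canon_rel :: "enat \<Rightarrow> fm set \<Rightarrow> fm set \<Rightarrow> bool" where
  "canon_rel a \<Gamma> \<Delta> \<longleftrightarrow>
     (\<forall>E\<in>\<Delta>. Dia a E \<in> \<Gamma>) \<and> (\<forall>b E. b < a \<longrightarrow> Dia b E \<in> \<Gamma> \<longrightarrow> Dia b E \<in> \<Delta>)"

text \<open>The side formula \<open>F\<close> (rather than \<open>C\<close> itself) makes the conjunction case of the
  induction go through: the formula already pushed under \<open>\<diamond>\<^sub>a\<close> is absorbed into \<open>F\<close>.\<close>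

lemma Dia_And_in_world:
  assumes "E \<in> world Ax A ((a, C) # l)"
  shows "Dia a F \<in> world Ax A l \<Longrightarrow> prov Ax F C \<Longrightarrow> Dia a (And F E) \<in> world Ax A l"
  using assms
proof (induction arbitrary: F rule: Cn.induct)
  case (base D)
  show ?case
  proof (cases "D = C")
    case True
    then show ?thesis
      using base.prems by (blast intro: Cn.prov prov.mono prov.conjI prov.refl)
  next
    case False
    then obtain b D' where "D = Dia b D'" "b < a" "Dia b D' \<in> world Ax A l"
      using base.hyps by auto
    then show ?thesis
      using base.prems by (blast intro: Cn.conj Cn.prov prov.pull)
  qed
next
  case top
  then show ?case by (blast intro: Cn.prov prov.mono prov.conjI prov.refl prov.top)
next
  case (conj D E)
  have "Dia a (And F D) \<in> world Ax A l"
    using conj.IH(1) conj.prems .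
  moreover have "prov Ax (And F D) C"
    using conj.prems(2) by (blast intro: prov.cut prov.conjE1)
  ultimately have "Dia a (And (And F D) E) \<in> world Ax A l"
    using conj.IH(2) by blast
  moreover have "prov Ax (And (And F D) E) (And F (And D E))"
    by (meson prov.conjE1 prov.conjE2 prov.conjI prov.cut)
  ultimately show ?case by (blast intro: Cn.prov prov.mono)
next
  case (prov D E)
  then have "Dia a (And F D) \<in> world Ax A l" by blast
  moreover have "prov Ax (And F D) (And F E)"
    using prov.hyps(2) by (blast intro: prov.conjI prov.conjE1 prov.conjE2 prov.cut)
  ultimately show ?case by (blast intro: Cn.prov prov.mono)
qed

lemma canon_rel_witness:
  assumes "Dia a C \<in> world Ax A l"
  shows "canon_rel a (world Ax A l) (world Ax A ((a, C) # l))"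
    and "C \<in> world Ax A ((a, C) # l)"
proof -
  have "Dia a E \<in> world Ax A l" if "E \<in> world Ax A ((a, C) # l)" for E
    using Dia_And_in_world[OF that assms prov.refl]
    by (blast intro: Cn.prov prov.mono prov.conjE2)
  then show "canon_rel a (world Ax A l) (world Ax A ((a, C) # l))"
    unfolding canon_rel_def by (auto intro: Cn.base)
  show "C \<in> world Ax A ((a, C) # l)" by (simp add: Cn.base)
qed

lemma prov_Dia_Dia_min: "prov Ax (Dia a (Dia b E)) (Dia (min a b) E)"
  by (cases "a \<le> b") (simp_all add: prov.absorb1 prov.absorb2 min_absorb2)

lemma canon_rel_comp:
  assumes "canon_rel a (Cn Ax S) \<Delta>" "canon_rel b \<Delta> T"
  shows "canon_rel (min a b) (Cn Ax S) T"
  unfolding canon_rel_def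
proof (intro HOL.conjI ballI allI impI)
  fix E assume "E \<in> T"
  then have "Dia a (Dia b E) \<in> Cn Ax S" using assms unfolding canon_rel_def by blast
  then show "Dia (min a b) E \<in> Cn Ax S" using Cn.prov prov_Dia_Dia_min by blast
next
  fix c E assume "c < min a b" "Dia c E \<in> Cn Ax S"
  then show "Dia c E \<in> T" using assms unfolding canon_rel_def by simp
qed

lemma canon_rel_pull:
  assumes "b < a" "canon_rel a (Cn Ax S) \<Delta>" "canon_rel b (Cn Ax S) T"
  shows "canon_rel b \<Delta> T"
  unfolding canon_rel_def
proof (intro HOL.conjI ballI allI impI)
  fix E assume "E \<in> T"
  then show "Dia b E \<in> \<Delta>" using assms unfolding canon_rel_def by blast
next
  fix c E assume "c < b" "Dia c E \<in> \<Delta>"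
  then have "Dia a (Dia c E) \<in> Cn Ax S" using assms(2) unfolding canon_rel_def by blast
  moreover have "c \<le> a" using \<open>c < b\<close> \<open>b < a\<close> by simp
  ultimately have "Dia c E \<in> Cn Ax S" using Cn.prov prov.absorb1 by blast
  then show "Dia c E \<in> T" using \<open>c < b\<close> assms(3) unfolding canon_rel_def by blast
qed

lemma canon_rel_antimono:
  assumes "\<And>C D. RC_ax C D \<Longrightarrow> Ax C D" "b < a" "canon_rel a (Cn Ax S) \<Delta>"
  shows "canon_rel b (Cn Ax S) \<Delta>"
proof -
  have "prov Ax (Dia a E) (Dia b E)" for E
    using assms(1,2) unfolding RC_ax_def by (blast intro: prov.ax)
  then show ?thesis
    using assms(2,3) unfolding canon_rel_def by (auto intro: Cn.prov)
qed

instance fm :: countable by countable_datatype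

text \<open>The carrier of a frame is a set of naturals, so worlds are coded paths.\<close>

definition canon_R :: "(fm \<Rightarrow> fm \<Rightarrow> bool) \<Rightarrow> fm \<Rightarrow> enat \<Rightarrow> nat \<Rightarrow> nat \<Rightarrow> bool" where
  "canon_R Ax A a x y \<longleftrightarrow> canon_rel a (world Ax A (from_nat x)) (world Ax A (from_nat y))"

definition canon_V :: "(fm \<Rightarrow> fm \<Rightarrow> bool) \<Rightarrow> fm \<Rightarrow> nat \<Rightarrow> nat \<Rightarrow> bool" where
  "canon_V Ax A p x \<longleftrightarrow> Var p \<in> world Ax A (from_nat x)"

lemma canon_truth:
  "sat UNIV (canon_R Ax A) (canon_V Ax A) x D \<longleftrightarrow> D \<in> world Ax A (from_nat x)"
proof (induction D arbitrary: x)
  case (Dia a C)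
  show ?case
  proof
    assume "sat UNIV (canon_R Ax A) (canon_V Ax A) x (Dia a C)"
    then show "Dia a C \<in> world Ax A (from_nat x)"
      using Dia.IH unfolding canon_R_def canon_rel_def by auto
  next
    assume "Dia a C \<in> world Ax A (from_nat x)"
    moreover define y where "y = to_nat ((a, C) # from_nat x)"
    ultimately have "canon_R Ax A a x y" "C \<in> world Ax A (from_nat y)"
      using canon_rel_witness unfolding canon_R_def by auto
    then show "sat UNIV (canon_R Ax A) (canon_V Ax A) x (Dia a C)"
      using Dia.IH by auto
  qed
qed (auto simp: canon_V_def And_in_Cn_iff Cn.top)

lemma canon_RJ_frame: "RJ_frame UNIV (canon_R Ax A)"
  unfolding RJ_frame_def canon_R_def using canon_rel_comp canon_rel_pull by blast

lemma canon_RC_frame: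
  assumes "\<And>C D. RC_ax C D \<Longrightarrow> Ax C D"
  shows "RC_frame UNIV (canon_R Ax A)"
proof -
  have "canon_R Ax A b x y" if "b < a" "canon_R Ax A a x y" for a b x y
    using canon_rel_antimono[where Ax = Ax, OF assms that(1)] that(2) unfolding canon_R_def by blast
  then show ?thesis unfolding RC_frame_def using canon_RJ_frame by blast
qed

lemma canon_persistent:
  assumes "\<And>C. Ax (Dia \<infinity> C) C"
  shows "persistent UNIV (canon_R Ax A) (canon_V Ax A)"
  unfolding persistent_def canon_V_def canon_R_def canon_rel_def
  using assms by (blast intro: Cn.prov prov.ax)

lemma prov_of_canon_true_in:
  assumes "true_in UNIV (canon_R Ax A) (canon_V Ax A) A B"
  shows "prov Ax A B"
proof -
  let ?root = "to_nat ([] :: (enat \<times> fm) list)"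
  have "A \<in> world Ax A (from_nat ?root)" by (simp add: Cn.base)
  then have "B \<in> world Ax A (from_nat ?root)"
    using assms canon_truth unfolding true_in_def by blast
  then show ?thesis by (simp add: prov_of_Cn_singleton)
qed

theorem theorem4p1:
  shows "(RJ_prov A B \<longleftrightarrow> (\<forall>W R V. RJ_frame W R \<longrightarrow> true_in W R V A B))
       \<and> (RC_prov A B \<longleftrightarrow> (\<forall>W R V. RC_frame W R \<longrightarrow> true_in W R V A B))
       \<and> (RCw_prov A B \<longleftrightarrow> (\<forall>W R V. RC_frame W R \<and> persistent W R V \<longrightarrow> true_in W R V A B))"
proof (intro HOL.conjI iffI allI impI)
  show "true_in W R V A B" if "RJ_prov A B" "RJ_frame W R" for W R V
    using that by (rule prov_sound) (simp add: RJ_ax_def)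
  show "true_in W R V A B" if "RC_prov A B" "RC_frame W R" for W R V
    using that(1) by (rule prov_sound) (use that(2) RC_ax_valid in \<open>simp_all add: RC_frame_def\<close>)
  show "true_in W R V A B" if "RCw_prov A B" "RC_frame W R \<and> persistent W R V" for W R V
    using that(1) by (rule prov_sound) (use that(2) RCw_ax_valid in \<open>simp_all add: RC_frame_def\<close>)
  show "RJ_prov A B" if "\<forall>W R V. RJ_frame W R \<longrightarrow> true_in W R V A B"
    using that canon_RJ_frame by (intro prov_of_canon_true_in) blast
  show "RC_prov A B" if "\<forall>W R V. RC_frame W R \<longrightarrow> true_in W R V A B"
    using that canon_RC_frame[of RC_ax] by (intro prov_of_canon_true_in) blast
  show "RCw_prov A B" if "\<forall>W R V. RC_frame W R \<and> persistent W R V \<longrightarrow> true_in W R V A B"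
  proof (rule prov_of_canon_true_in)
    have "RC_frame UNIV (canon_R RCw_ax A)" "persistent UNIV (canon_R RCw_ax A) (canon_V RCw_ax A)"
      by (simp_all add: canon_RC_frame canon_persistent RCw_ax_def)
    then show "true_in UNIV (canon_R RCw_ax A) (canon_V RCw_ax A) A B" using that by blast
  qed
qed

end
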